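(* Let $q$ be a prime power and let $s,t$ be non-negative integers with $s+t>0$ and $t<q$. Put $n=s(q+1)+t+1$. Then the $[n,2,sq+t;(q-1)(t+1)]_q$ linear code is AFER-optimal; that is, there exists an $[n,2,sq+t]_q$ linear code having exactly $(q-1)(t+1)$ codewords of weight $sq+t$, the largest minimum distance of an $[n,2]_q$ linear code is $d(n,2,q)=sq+t$, and every $[n,2,sq+t]_q$ linear code has at least $(q-1)(t+1)$ codewords of weight $sq+t$, i.e. $e(n,2,q)=(q-1)(t+1)$.
   Context: An $[n,k]_q$ linear code is a $k$-dimensional subspace of $\mathbb{F}_q^n$; the weight of a vector is its number of nonzero coordinates; an $[n,k,d]_q$ code is one with minimum nonzero weight $d$, and $A_d(C)$ (the error coefficient) is the number of codewords of weight $d$. $d(n,k,q)$ denotes the largest minimum distance of an $[n,k]_q$ linear code, and $e(n,k,q)$ the smallest value of $A_{d(n,k,q)}(C)$ over all $[n,k,d(n,k,q)]_q$ linear codes $C$. An $[n,k,d]_q$ code $C$ is AFER-optimal if $d=d(n,k,q)$ and $A_d(C)=e(n,k,q)$. *)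

theory Defs
  imports Complex_Main "HOL-Library.Function_Algebras"
begin

text \<open>Vectors of F_q^n are modelled as functions nat => 'a vanishing outside {0..<n}.
  The field F_q is a type 'a of class field and finite, with q = CARD('a).\<close>

definition fvec :: "nat \<Rightarrow> (nat \<Rightarrow> 'a::zero) set" where
  "fvec n = {v. \<forall>i\<ge>n. v i = 0}"

definition fscale :: "'a::times \<Rightarrow> (nat \<Rightarrow> 'a) \<Rightarrow> (nat \<Rightarrow> 'a)" where
  "fscale c v = (\<lambda>i. c * v i)"

definition hweight :: "nat \<Rightarrow> (nat \<Rightarrow> 'a::zero) \<Rightarrow> nat" where
  "hweight n v = card {i. i < n \<and> v i \<noteq> 0}"

definition linear_code :: "nat \<Rightarrow> nat \<Rightarrow> (nat \<Rightarrow> 'a::field) set \<Rightarrow> bool" where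
  "linear_code n k C \<longleftrightarrow> C \<subseteq> fvec n \<and> module.subspace fscale C
     \<and> vector_space.dim fscale C = k"

definition has_min_dist :: "nat \<Rightarrow> (nat \<Rightarrow> 'a::zero) set \<Rightarrow> nat \<Rightarrow> bool" where
  "has_min_dist n C d \<longleftrightarrow> (\<exists>v\<in>C. v \<noteq> 0 \<and> hweight n v = d)
     \<and> (\<forall>v\<in>C. v \<noteq> 0 \<longrightarrow> d \<le> hweight n v)"

definition num_weight :: "nat \<Rightarrow> (nat \<Rightarrow> 'a::zero) set \<Rightarrow> nat \<Rightarrow> nat" where
  "num_weight n C d = card {v\<in>C. hweight n v = d}"

end

theory Submission
  imports Defs "HOL-Library.Cardinality"
begin

text \<open>Write a two-dimensional code as {a u + b v}. A nonzero column (u i, v i) carries a nonzero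
  entry for exactly q (q - 1) of the q^2 coefficient pairs (a, b), so the q^2 - 1 nonzero codewords
  have total weight at most n q (q - 1). Comparing with (q^2 - 1) d gives d \<le> s q + t, and when
  d = s q + t the slack in the same count forces at least (q - 1)(t + 1) codewords of weight d.
  Both bounds are attained by the code whose columns run s times through the q + 1 points of the
  projective line and then through t + 1 of them once more: a nonzero codeword vanishes at exactly
  one projective point, so its weight is s q + t + 1, minus one if that point is among the last
  t + 1 columns.\<close>

interpretation fv: vector_space "fscale :: 'a::field \<Rightarrow> (nat \<Rightarrow> 'a) \<Rightarrow> (nat \<Rightarrow> 'a)"
  by unfold_locales (auto simp: fscale_def fun_eq_iff algebra_simps)

lemma fscale_apply [simp]: "fscale c v i = c * v i"
  by (simp add: fscale_def)

lemma hweight_zero [simp]: "hweight n 0 = 0"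
  by (simp add: hweight_def)

lemma hweight_eq_card_zeros: "hweight n w = n - card {i. i < n \<and> w i = 0}"
proof -
  have "{i. i < n \<and> w i \<noteq> 0} = {..<n} - {i. i < n \<and> w i = 0}"
    by auto
  moreover have "card ({..<n} - {i. i < n \<and> w i = 0}) = n - card {i. i < n \<and> w i = 0}"
    by (subst card_Diff_subset) auto
  ultimately show ?thesis
    by (simp add: hweight_def)
qed

lemma hweight_cong: "(\<And>i. i < n \<Longrightarrow> v i = w i) \<Longrightarrow> hweight n v = hweight n w"
  unfolding hweight_def by (auto intro!: arg_cong[where f = card])

definition dot2 :: "'a \<times> 'a \<Rightarrow> 'a \<times> 'a \<Rightarrow> 'a::comm_semiring" where
  "dot2 p x = fst p * fst x + snd p * snd x"

definition pair_comb :: "(nat \<Rightarrow> 'a) \<Rightarrow> (nat \<Rightarrow> 'a) \<Rightarrow> 'a \<times> 'a \<Rightarrow> nat \<Rightarrow> 'a::field" where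
  "pair_comb u v p = fscale (fst p) u + fscale (snd p) v"

lemma pair_comb_apply: "pair_comb u v p i = dot2 p (u i, v i)"
  by (simp add: pair_comb_def dot2_def)

lemma pair_comb_zero [simp]: "pair_comb u v (0, 0) = 0"
  by (simp add: pair_comb_def fun_eq_iff)

lemma pair_comb_diff:
  "pair_comb u v p - pair_comb u v p' = pair_comb u v (fst p - fst p', snd p - snd p')"
  by (simp add: pair_comb_def fun_eq_iff algebra_simps)

lemma inj_pair_comb_iff:
  "inj (pair_comb u v) \<longleftrightarrow> (\<forall>p. pair_comb u v p = 0 \<longrightarrow> p = (0, 0))"
proof
  assume "inj (pair_comb u v)"
  then show "\<forall>p. pair_comb u v p = 0 \<longrightarrow> p = (0, 0)"
    by (metis injD pair_comb_zero)
next
  assume kernel: "\<forall>p. pair_comb u v p = 0 \<longrightarrow> p = (0, 0)"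
  show "inj (pair_comb u v)"
  proof (rule injI)
    fix p p' assume "pair_comb u v p = pair_comb u v p'"
    then have "pair_comb u v (fst p - fst p', snd p - snd p') = 0"
      by (simp flip: pair_comb_diff)
    then have "fst p - fst p' = 0 \<and> snd p - snd p' = 0"
      using kernel by blast
    then show "p = p'" by (simp add: prod_eq_iff)
  qed
qed

lemma range_pair_comb: "range (pair_comb u v) = fv.span {u, v}"
  unfolding insert_is_Un[of u "{v}"] fv.span_Un fv.span_singleton
  by (auto simp: pair_comb_def image_iff) metis

lemma inj_pair_comb_independent:
  assumes "inj (pair_comb u v)"
  shows "fv.independent {u, v}" and "u \<noteq> v"
proof -
  have kernel: "a = 0 \<and> b = 0" if "fscale a u + fscale b v = 0" for a b
    using assms that by (auto simp: inj_pair_comb_iff pair_comb_def)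
  show "u \<noteq> v"
    using kernel[of 1 "-1"] by (auto simp: fun_eq_iff)
  have "v \<noteq> 0"
    using kernel[of 0 1] by auto
  moreover have "u \<notin> fv.span {v}"
  proof
    assume "u \<in> fv.span {v}"
    then obtain c where "u = fscale c v" by (auto simp: fv.span_singleton)
    then show False using kernel[of 1 "- c"] by (simp add: fun_eq_iff)
  qed
  ultimately show "fv.independent {u, v}"
    using \<open>u \<noteq> v\<close> by (simp add: fv.independent_insert)
qed

lemma linear_code_2_range_pair_comb:
  fixes u v :: "nat \<Rightarrow> 'a::field"
  assumes "u \<in> fvec n" "v \<in> fvec n" "inj (pair_comb u v)"
  shows "linear_code n 2 (range (pair_comb u v))"
proof -
  have "range (pair_comb u v) \<subseteq> fvec n"
    using assms(1,2) by (auto simp: fvec_def pair_comb_apply dot2_def)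
  moreover have "fv.dim (fv.span {u, v}) = 2"
    using inj_pair_comb_independent[OF assms(3)] by (simp add: fv.dim_eq_card_independent)
  ultimately show ?thesis
    unfolding linear_code_def by (simp add: range_pair_comb fv.subspace_span)
qed

lemma linear_code_2E:
  fixes C :: "(nat \<Rightarrow> 'a::field) set"
  assumes "linear_code n 2 C"
  obtains u v where "inj (pair_comb u v)" "C = range (pair_comb u v)"
proof -
  have "fv.subspace C" and "fv.dim C = 2"
    using assms by (auto simp: linear_code_def)
  obtain B where B: "B \<subseteq> C" "fv.independent B" "C \<subseteq> fv.span B" "card B = 2"
    using fv.basis_exists \<open>fv.dim C = 2\<close> by metis
  have "C = fv.span B"
    using B \<open>fv.subspace C\<close> by (metis fv.span_minimal subset_antisym)
  obtain u v where uv: "B = {u, v}" "u \<noteq> v"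
    using B(4) by (metis card_2_iff)
  have "v \<noteq> 0" and u_notin: "u \<notin> fv.span {v}"
    using B(2) uv by (auto simp: fv.independent_insert)
  have "p = (0, 0)" if "pair_comb u v p = 0" for p
  proof (cases "fst p = 0")
    case True
    then show ?thesis using that \<open>v \<noteq> 0\<close> by (auto simp: pair_comb_def prod_eq_iff)
  next
    case False
    have "u = fscale (- snd p / fst p) v"
      using that False by (auto simp: pair_comb_def fun_eq_iff field_simps add_eq_0_iff)
    then have "u \<in> fv.span {v}" unfolding fv.span_singleton by (metis rangeI)
    with u_notin show ?thesis by simp
  qed
  then have "inj (pair_comb u v)"
    by (simp add: inj_pair_comb_iff)
  moreover have "C = range (pair_comb u v)"
    unfolding \<open>C = fv.span B\<close> uv range_pair_comb ..
  ultimately show thesis by (rule that)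
qed

lemma inj_pair_comb_if_hweight_pos:
  assumes "\<And>p. p \<noteq> (0, 0) \<Longrightarrow> 0 < hweight n (pair_comb u v p)"
  shows "inj (pair_comb u v)"
  unfolding inj_pair_comb_iff
proof (intro allI impI)
  fix p assume "pair_comb u v p = 0"
  then show "p = (0, 0)"
    using assms[of p] by (metis hweight_zero less_irrefl)
qed

lemma has_min_dist_range_pair_comb:
  assumes "\<And>p. p \<noteq> (0, 0) \<Longrightarrow> d \<le> hweight n (pair_comb u v p)"
    and "p0 \<noteq> (0, 0)" and "hweight n (pair_comb u v p0) = d" and "0 < d"
  shows "has_min_dist n (range (pair_comb u v)) d"
  unfolding has_min_dist_def
proof (intro conjI ballI impI)
  show "\<exists>w\<in>range (pair_comb u v). w \<noteq> 0 \<and> hweight n w = d"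
    using assms(3,4) by (intro bexI[of _ "pair_comb u v p0"]) auto
next
  fix w assume "w \<in> range (pair_comb u v)" "w \<noteq> 0"
  then obtain p where "w = pair_comb u v p"
    by blast
  with \<open>w \<noteq> 0\<close> have "p \<noteq> (0, 0)"
    by auto
  then show "d \<le> hweight n w"
    using assms(1) \<open>w = pair_comb u v p\<close> by blast
qed

lemma num_weight_range_pair_comb:
  assumes "inj (pair_comb u v)"
  shows "num_weight n (range (pair_comb u v)) d = card {p. hweight n (pair_comb u v p) = d}"
proof -
  have "{w \<in> range (pair_comb u v). hweight n w = d} = pair_comb u v ` {p. hweight n (pair_comb u v p) = d}"
    by auto
  then show ?thesis
    unfolding num_weight_def using assms by (simp add: card_image inj_on_subset)
qed

lemma card_UNIV_field_ge_2: "2 \<le> CARD('a::{field,finite})"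
proof -
  have "card {0 :: 'a, 1} \<le> CARD('a)"
    by (rule card_mono) auto
  then show ?thesis
    by simp
qed

lemma ex_nonzero_dot2_eq_0:
  fixes x :: "'a::field \<times> 'a"
  assumes "x \<noteq> (0, 0)"
  obtains p where "p \<noteq> (0, 0)" "dot2 p x = 0"
proof
  show "(- snd x, fst x) \<noteq> (0, 0)"
    using assms by (auto simp: prod_eq_iff)
  show "dot2 (- snd x, fst x) x = 0"
    by (simp add: dot2_def)
qed

lemma card_dot2_eq_0:
  fixes x :: "'a::{field,finite} \<times> 'a"
  assumes "x \<noteq> (0, 0)"
  shows "card {p. dot2 p x = 0} = CARD('a)"
proof -
  have "{p. dot2 p x = 0} = (\<lambda>c. (- c * snd x, c * fst x)) ` UNIV"
  proof (intro set_eqI iffI)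
    fix p assume "p \<in> {p. dot2 p x = 0}"
    then have p: "fst p * fst x + snd p * snd x = 0" by (simp add: dot2_def)
    show "p \<in> (\<lambda>c. (- c * snd x, c * fst x)) ` UNIV"
    proof (cases "fst x = 0")
      case True
      then have "snd x \<noteq> 0" using assms by (simp add: prod_eq_iff)
      then have "p = (- (- fst p / snd x) * snd x, (- fst p / snd x) * fst x)"
        using p True by (simp add: prod_eq_iff)
      then show ?thesis by blast
    next
      case False
      then have "p = (- (snd p / fst x) * snd x, (snd p / fst x) * fst x)"
        using p by (auto simp: prod_eq_iff field_simps add_eq_0_iff)
      then show ?thesis by blast
    qed
  qed (auto simp: dot2_def algebra_simps)
  moreover have "inj (\<lambda>c. (- c * snd x, c * fst x))"
    using assms by (auto intro!: injI simp: prod_eq_iff)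
  ultimately show ?thesis by (simp add: card_image)
qed

lemma card_dot2_neq_0_le:
  fixes x :: "'a::{field,finite} \<times> 'a"
  shows "card {p. dot2 p x \<noteq> 0} \<le> CARD('a) * (CARD('a) - 1)"
proof (cases "x = (0, 0)")
  case True
  then show ?thesis by (simp add: dot2_def)
next
  case False
  have "{p. dot2 p x \<noteq> 0} = UNIV - {p. dot2 p x = 0}" by auto
  then have "card {p. dot2 p x \<noteq> 0} = CARD('a \<times> 'a) - CARD('a)"
    using card_dot2_eq_0[OF False] by (simp add: card_Diff_subset)
  then show ?thesis by (simp add: diff_mult_distrib2)
qed

lemma card_nonzero_dot2_eq_0:
  fixes x :: "'a::{field,finite} \<times> 'a"
  assumes "x \<noteq> (0, 0)"
  shows "card {p. p \<noteq> (0, 0) \<and> dot2 p x = 0} = CARD('a) - 1"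
proof -
  have "{p. p \<noteq> (0, 0) \<and> dot2 p x = 0} = {p. dot2 p x = 0} - {(0, 0)}"
    by auto
  then show ?thesis
    using card_dot2_eq_0[OF assms] by (simp add: dot2_def)
qed

lemma sum_hweight_pair_comb_le:
  fixes u v :: "nat \<Rightarrow> 'a::{field,finite}"
  shows "(\<Sum>p\<in>UNIV. hweight n (pair_comb u v p)) \<le> n * (CARD('a) * (CARD('a) - 1))"
proof -
  have "(\<Sum>p\<in>UNIV. hweight n (pair_comb u v p))
      = (\<Sum>p\<in>UNIV. \<Sum>i<n. of_bool (dot2 p (u i, v i) \<noteq> 0))"
    by (simp add: hweight_def pair_comb_apply lessThan_def Collect_conj_eq Int_commute)
  also have "\<dots> = (\<Sum>i<n. card {p. dot2 p (u i, v i) \<noteq> 0})"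
    by (subst sum.swap) simp
  also have "\<dots> \<le> (\<Sum>i<n. CARD('a) * (CARD('a) - 1))"
    by (intro sum_mono card_dot2_neq_0_le)
  finally show ?thesis by simp
qed

lemma card_mult_le_sum_plus_card_eq:
  fixes W :: "'b \<Rightarrow> nat"
  assumes "finite A" and "\<And>x. x \<in> A \<Longrightarrow> d \<le> W x"
  shows "(d + 1) * card A \<le> sum W A + card {x\<in>A. W x = d}"
proof -
  have "(d + 1) * card A = (\<Sum>x\<in>A. d + 1)" by simp
  also have "\<dots> \<le> (\<Sum>x\<in>A. W x + of_bool (W x = d))"
    using assms(2) by (intro sum_mono) fastforce
  also have "\<dots> = sum W A + card {x\<in>A. W x = d}"
    using assms(1) by (simp add: sum.distrib Int_def)
  finally show ?thesis .
qed

lemma linear_code_2_weight_bounds: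
  fixes C :: "(nat \<Rightarrow> 'a::{field,finite}) set"
  assumes "linear_code n 2 C" and "has_min_dist n C d"
  defines "q \<equiv> CARD('a)"
  shows "d * (q * q - 1) \<le> n * (q * (q - 1))"
    and "(d + 1) * (q * q - 1) \<le> n * (q * (q - 1)) + num_weight n C d"
proof -
  obtain u v where inj: "inj (pair_comb u v)" and C: "C = range (pair_comb u v)"
    using linear_code_2E[OF assms(1)] .
  define A where "A = C - {0}"
  have "finite A"
    by (simp add: A_def C)
  have "card C = q * q"
    using inj by (simp add: C q_def card_image)
  moreover have "0 \<in> C"
    by (simp add: C rev_image_eqI[of "(0, 0)"])
  ultimately have card_A: "card A = q * q - 1"
    by (simp add: A_def C)
  have "sum (hweight n) A = sum (hweight n) C"
    using sum.remove[of C 0 "hweight n"] \<open>0 \<in> C\<close> by (simp add: A_def C)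
  also have "\<dots> = (\<Sum>p\<in>UNIV. hweight n (pair_comb u v p))"
    using inj by (simp add: C sum.reindex)
  finally have sum_A: "sum (hweight n) A \<le> n * (q * (q - 1))"
    using sum_hweight_pair_comb_le[of n u v] by (simp add: q_def)
  have min_A: "d \<le> hweight n w" if "w \<in> A" for w
    using assms(2) that by (auto simp: has_min_dist_def A_def)
  have "d * card A \<le> sum (hweight n) A"
    using sum_bounded_below[of A d "hweight n"] min_A by (simp add: mult.commute)
  then show "d * (q * q - 1) \<le> n * (q * (q - 1))"
    using card_A sum_A by simp
  have "(d + 1) * (q * q - 1) \<le> sum (hweight n) A + card {w\<in>A. hweight n w = d}"
    unfolding card_A[symmetric] using \<open>finite A\<close> min_A by (rule card_mult_le_sum_plus_card_eq)
  moreover have "card {w\<in>A. hweight n w = d} \<le> num_weight n C d"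
    unfolding num_weight_def by (rule card_mono) (auto simp: A_def C)
  ultimately show "(d + 1) * (q * q - 1) \<le> n * (q * (q - 1)) + num_weight n C d"
    using sum_A by linarith
qed

lemma card_mod_less_mult_add:
  fixes m :: nat
  assumes "r \<le> m"
  shows "card {i. i < s * m + r \<and> Q (i mod m)} = s * card {k. k < m \<and> Q k} + card {k. k < r \<and> Q k}"
proof (induction s)
  case 0
  have "{i. i < r \<and> Q (i mod m)} = {k. k < r \<and> Q k}"
    using assms by auto
  then show ?case by simp
next
  case (Suc s)
  define N where "N = s * m + r"
  have blocks: "{i. i < m + N \<and> Q (i mod m)} = {k. k < m \<and> Q k} \<union> (\<lambda>i. m + i) ` {i. i < N \<and> Q (i mod m)}"
  proof (intro set_eqI iffI)
    fix i assume i: "i \<in> {i. i < m + N \<and> Q (i mod m)}"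
    show "i \<in> {k. k < m \<and> Q k} \<union> (\<lambda>i. m + i) ` {i. i < N \<and> Q (i mod m)}"
    proof (cases "i < m")
      case False
      then obtain j where "i = m + j"
        by (metis le_add_diff_inverse not_less)
      then show ?thesis
        using i by auto
    qed (use i in auto)
  qed auto
  have "card {i. i < m + N \<and> Q (i mod m)} = card {k. k < m \<and> Q k} + card {i. i < N \<and> Q (i mod m)}"
    unfolding blocks by (subst card_Un_disjoint) (auto simp: card_image)
  then show ?case
    using Suc.IH by (simp add: N_def add.assoc)
qed

text \<open>P 0, ..., P q represent the q + 1 points of the projective line over 'a, as kernels of
  the nonzero functionals dot2 p.\<close>

definition projective_line_enum :: "(nat \<Rightarrow> 'a::field \<times> 'a) \<Rightarrow> bool" where
  "projective_line_enum P \<longleftrightarrow>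
     (\<forall>k\<le>CARD('a). P k \<noteq> (0, 0)) \<and>
     (\<forall>p. p \<noteq> (0, 0) \<longrightarrow> (\<exists>!k. k \<le> CARD('a) \<and> dot2 p (P k) = 0))"

lemma ex_projective_line_enum: "\<exists>P :: nat \<Rightarrow> 'a::{field,finite} \<times> 'a. projective_line_enum P"
proof -
  obtain e :: "nat \<Rightarrow> 'a" where e: "bij_betw e {..<CARD('a)} UNIV"
    using ex_bij_betw_nat_finite[of "UNIV :: 'a set"] by (auto simp: atLeast0LessThan)
  define P :: "nat \<Rightarrow> 'a \<times> 'a" where "P k = (if k < CARD('a) then (1, e k) else (0, 1))" for k
  have "\<exists>!k. k \<le> CARD('a) \<and> dot2 p (P k) = 0" if p: "p \<noteq> (0, 0)" for p
  proof (cases "snd p = 0")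
    case True
    then have "fst p \<noteq> 0" using p by (simp add: prod_eq_iff)
    with True show ?thesis
      by (intro ex1I[of _ "CARD('a)"]) (auto simp: P_def dot2_def split: if_splits)
  next
    case False
    have "- fst p / snd p \<in> e ` {..<CARD('a)}"
      using e by (simp add: bij_betw_def)
    then obtain k0 where k0: "k0 < CARD('a)" "e k0 = - fst p / snd p"
      by auto
    have "dot2 p (P k) = 0 \<longleftrightarrow> k = k0" if "k \<le> CARD('a)" for k
    proof (cases "k < CARD('a)")
      case True
      have "dot2 p (P k) = 0 \<longleftrightarrow> e k = - fst p / snd p"
        using True False by (auto simp: P_def dot2_def field_simps add_eq_0_iff)
      also have "\<dots> \<longleftrightarrow> k = k0"
        using k0 True e by (auto simp: bij_betw_def inj_on_def)
      finally show ?thesis .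
    qed (use False k0 that in \<open>simp add: P_def dot2_def\<close>)
    then show ?thesis
      using k0(1) by (intro ex1I[of _ k0]) auto
  qed
  moreover have "P k \<noteq> (0, 0)" for k
    by (simp add: P_def)
  ultimately show ?thesis
    unfolding projective_line_enum_def by blast
qed

lemma projective_line_enumE:
  fixes P :: "nat \<Rightarrow> 'a::field \<times> 'a"
  assumes "projective_line_enum P" and "p \<noteq> (0, 0)"
  obtains k where "k \<le> CARD('a)" "dot2 p (P k) = 0"
    and "\<And>j. j \<le> CARD('a) \<Longrightarrow> dot2 p (P j) = 0 \<Longrightarrow> j = k"
proof -
  have "\<exists>!k. k \<le> CARD('a) \<and> dot2 p (P k) = 0"
    using assms unfolding projective_line_enum_def by blast
  then show thesis
    using that by (elim ex1E) blast
qed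

lemma projective_line_enum_unique:
  fixes P :: "nat \<Rightarrow> 'a::field \<times> 'a"
  assumes "projective_line_enum P" and "p \<noteq> (0, 0)"
    and "j \<le> CARD('a)" "dot2 p (P j) = 0" and "k \<le> CARD('a)" "dot2 p (P k) = 0"
  shows "j = k"
proof -
  obtain k0 where "\<And>i. i \<le> CARD('a) \<Longrightarrow> dot2 p (P i) = 0 \<Longrightarrow> i = k0"
    using projective_line_enumE[OF assms(1,2)] by blast
  then show ?thesis
    using assms(3-) by blast
qed

lemma card_zeros_projective_line_enum:
  fixes P :: "nat \<Rightarrow> 'a::field \<times> 'a"
  assumes "projective_line_enum P" and "p \<noteq> (0, 0)" and "r \<le> CARD('a) + 1"
  shows "card {k. k < r \<and> dot2 p (P k) = 0} = of_bool (\<exists>k<r. dot2 p (P k) = 0)"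
proof -
  obtain k0 where k0: "k0 \<le> CARD('a)" "dot2 p (P k0) = 0"
    and unique: "\<And>j. j \<le> CARD('a) \<Longrightarrow> dot2 p (P j) = 0 \<Longrightarrow> j = k0"
    using projective_line_enumE[OF assms(1,2)] by blast
  have "k = k0" if "k < r" "dot2 p (P k) = 0" for k
    using unique[of k] that assms(3) by simp
  then have "{k. k < r \<and> dot2 p (P k) = 0} = {k0} \<inter> {..<r}"
    using k0 by blast
  then show ?thesis
    using k0(2) by (cases "k0 < r") auto
qed

lemma card_nonzero_vanishing_projective_line_enum:
  fixes P :: "nat \<Rightarrow> 'a::{field,finite} \<times> 'a"
  assumes "projective_line_enum P" and "r \<le> CARD('a) + 1"
  shows "card {p. p \<noteq> (0, 0) \<and> (\<exists>k<r. dot2 p (P k) = 0)} = r * (CARD('a) - 1)"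
proof -
  let ?V = "\<lambda>k. {p. p \<noteq> (0, 0) \<and> dot2 p (P k) = 0}"
  have "{p. p \<noteq> (0, 0) \<and> (\<exists>k<r. dot2 p (P k) = 0)} = (\<Union>k<r. ?V k)"
    by auto
  also have "card \<dots> = (\<Sum>k<r. card (?V k))"
  proof (rule card_UN_disjoint)
    show "\<forall>k\<in>{..<r}. \<forall>k'\<in>{..<r}. k \<noteq> k' \<longrightarrow> ?V k \<inter> ?V k' = {}"
    proof (intro ballI impI)
      fix k k' assume "k \<in> {..<r}" "k' \<in> {..<r}" "k \<noteq> k'"
      then have "k \<le> CARD('a)" "k' \<le> CARD('a)"
        using assms(2) by auto
      then show "?V k \<inter> ?V k' = {}"
        using projective_line_enum_unique[OF assms(1), of _ k k'] \<open>k \<noteq> k'\<close> by blast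
    qed
  qed auto
  also have "\<dots> = (\<Sum>k<r. CARD('a) - 1)"
    using assms by (intro sum.cong refl card_nonzero_dot2_eq_0) (auto simp: projective_line_enum_def)
  finally show ?thesis by simp
qed

lemma hweight_pair_comb_cyclic_projective_line_enum:
  fixes P :: "nat \<Rightarrow> 'a::{field,finite} \<times> 'a"
  assumes "projective_line_enum P" and "p \<noteq> (0, 0)" and "r \<le> CARD('a) + 1"
    and "n = s * (CARD('a) + 1) + r" and "\<And>i. i < n \<Longrightarrow> (u i, v i) = P (i mod (CARD('a) + 1))"
  shows "hweight n (pair_comb u v p) = s * CARD('a) + r - of_bool (\<exists>k<r. dot2 p (P k) = 0)"
proof -
  let ?m = "CARD('a) + 1"
  have "\<exists>k<?m. dot2 p (P k) = 0"
    using projective_line_enumE[OF assms(1,2)] by (metis less_Suc_eq_le Suc_eq_plus1)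
  then have "card {k. k < ?m \<and> dot2 p (P k) = 0} = 1"
    using card_zeros_projective_line_enum[OF assms(1,2), of ?m] by simp
  then have "card {i. i < s * ?m + r \<and> dot2 p (P (i mod ?m)) = 0}
      = s + of_bool (\<exists>k<r. dot2 p (P k) = 0)"
    using card_mod_less_mult_add[OF assms(3), of s "\<lambda>k. dot2 p (P k) = 0"]
      card_zeros_projective_line_enum[OF assms(1-3)] by simp
  moreover have "hweight n (pair_comb u v p) = hweight n (\<lambda>i. dot2 p (P (i mod ?m)))"
    using assms(5) by (intro hweight_cong) (simp add: pair_comb_apply)
  ultimately show ?thesis
    using assms(4) by (simp add: hweight_eq_card_zeros)
qed

lemma ex_linear_code_2_projective:
  fixes s t n q :: nat
  assumes q: "q = CARD('a::{field,finite})" and "0 < s + t" and "t \<le> q"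
    and n: "n = s * (q + 1) + t + 1"
  shows "\<exists>C :: (nat \<Rightarrow> 'a) set. linear_code n 2 C \<and> has_min_dist n C (s * q + t)
    \<and> num_weight n C (s * q + t) = (q - 1) * (t + 1)"
proof -
  obtain P :: "nat \<Rightarrow> 'a \<times> 'a" where P: "projective_line_enum P"
    using ex_projective_line_enum by blast
  define u where "u i = (if i < n then fst (P (i mod (q + 1))) else 0)" for i
  define v where "v i = (if i < n then snd (P (i mod (q + 1))) else 0)" for i
  define vanishes where "vanishes p \<longleftrightarrow> (\<exists>k<t + 1. dot2 p (P k) = 0)" for p
  have weight: "hweight n (pair_comb u v p) = s * q + t + 1 - of_bool (vanishes p)"
    if "p \<noteq> (0, 0)" for p
    using hweight_pair_comb_cyclic_projective_line_enum[OF P that, of "t + 1" n s u v] assms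
    by (simp add: u_def v_def vanishes_def)
  have "0 < s * q + t"
    using q \<open>0 < s + t\<close> by (cases s) auto
  then have weight_ge: "s * q + t \<le> hweight n (pair_comb u v p)" if "p \<noteq> (0, 0)" for p
    using weight[OF that] by simp
  have "inj (pair_comb u v)"
    using weight_ge \<open>0 < s * q + t\<close>
    by (intro inj_pair_comb_if_hweight_pos[where n = n]) (meson order.strict_trans2)
  then have code: "linear_code n 2 (range (pair_comb u v))"
    by (intro linear_code_2_range_pair_comb) (auto simp: fvec_def u_def v_def)
  have "P 0 \<noteq> (0, 0)"
    using P by (simp add: projective_line_enum_def)
  then obtain p0 where "p0 \<noteq> (0, 0)" "dot2 p0 (P 0) = 0"
    by (rule ex_nonzero_dot2_eq_0)
  then have "hweight n (pair_comb u v p0) = s * q + t"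
    using weight by (auto simp: vanishes_def)
  then have dist: "has_min_dist n (range (pair_comb u v)) (s * q + t)"
    using has_min_dist_range_pair_comb[of "s * q + t" n u v p0] weight_ge \<open>p0 \<noteq> (0, 0)\<close> \<open>0 < s * q + t\<close>
    by blast
  have "hweight n (pair_comb u v p) = s * q + t \<longleftrightarrow> p \<noteq> (0, 0) \<and> vanishes p" for p
    using weight[of p] \<open>0 < s * q + t\<close> by (cases "p = (0, 0)") auto
  then have "num_weight n (range (pair_comb u v)) (s * q + t) = card {p. p \<noteq> (0, 0) \<and> vanishes p}"
    using num_weight_range_pair_comb[OF \<open>inj (pair_comb u v)\<close>] by simp
  also have "\<dots> = (q - 1) * (t + 1)"
    using card_nonzero_vanishing_projective_line_enum[OF P, of "t + 1"] assms
    by (simp add: vanishes_def mult.commute)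
  finally show ?thesis
    using code dist by blast
qed

theorem theorem3:
  fixes s t n q :: nat
  assumes "q = card (UNIV :: 'a set)"
    and "s + t > 0" and "t < q"
    and "n = s * (q + 1) + t + 1"
  shows "(\<exists>C :: (nat \<Rightarrow> 'a::{field,finite}) set. linear_code n 2 C \<and> has_min_dist n C (s * q + t)
            \<and> num_weight n C (s * q + t) = (q - 1) * (t + 1))
       \<and> (\<forall>(C :: (nat \<Rightarrow> 'a) set) d. linear_code n 2 C \<and> has_min_dist n C d \<longrightarrow> d \<le> s * q + t)
       \<and> (\<forall>C :: (nat \<Rightarrow> 'a) set. linear_code n 2 C \<and> has_min_dist n C (s * q + t)
            \<longrightarrow> (q - 1) * (t + 1) \<le> num_weight n C (s * q + t))"
proof -
  have "2 \<le> q"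
    using assms(1) card_UNIV_field_ge_2 by simp
  have identity: "(s * q + t + 1) * (q * q - 1) = n * (q * (q - 1)) + (q - 1) * (t + 1)"
    using \<open>2 \<le> q\<close> assms(4) by (cases q) (simp_all add: algebra_simps)
  have "d \<le> s * q + t" if "linear_code n 2 C" "has_min_dist n C d" for C :: "(nat \<Rightarrow> 'a) set" and d
  proof (rule ccontr)
    assume "\<not> d \<le> s * q + t"
    then have "(s * q + t + 1) * (q * q - 1) \<le> d * (q * q - 1)"
      by (intro mult_le_mono1) simp
    moreover have "d * (q * q - 1) \<le> n * (q * (q - 1))"
      using linear_code_2_weight_bounds(1)[OF that] assms(1) by simp
    moreover have "0 < (q - 1) * (t + 1)"
      using \<open>2 \<le> q\<close> by simp
    ultimately show False
      using identity by linarith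
  qed
  moreover have "(q - 1) * (t + 1) \<le> num_weight n C (s * q + t)"
    if "linear_code n 2 C" "has_min_dist n C (s * q + t)" for C :: "(nat \<Rightarrow> 'a) set"
    using linear_code_2_weight_bounds(2)[OF that] assms(1) identity by simp
  ultimately show ?thesis
    using ex_linear_code_2_projective[OF assms(1,2) less_imp_le[OF assms(3)] assms(4)] by blast
qed

end
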